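(* Let $n\ge2$, $j\ge0$, $b\in B$, $(\mu_i)_{i=1}^n\in\mathbb Z^n$ and $\mu=-\mu_1\Lambda_0+(\mu_1-\mu_2)\Lambda_1+\cdots+(\mu_{n-1}-\mu_n)\Lambda_{n-1}+2\mu_n\Lambda_n$. Then $$g_j(b,\mu)=\sum_\gamma q^{\frac12\sum_{i\in B,i\ne0}\gamma_i(\gamma_i-1)+\sum_{i\in B}H(b\otimes i)\gamma_i}\begin{bmatrix}j\\ \gamma\end{bmatrix}_q,$$ the sum over $\gamma=(\gamma_i)_{i\in B}\in\mathbb Z_{\ge0}^{2n+1}$ with $\gamma_i-\gamma_{\bar i}=\mu_i$ for $i=1,\dots,n$ and $\sum_{i\in B}\gamma_i=j$.
   Context: Affine algebra $A^{(2)}_{2n}$ with Dynkin nodes labeled so that the unique level-1 dominant weight is $\Lambda_n$; fundamental weights $\Lambda_0,\dots,\Lambda_n$, $P_{cl}=\bigoplus\mathbb Z\Lambda_i$. $B=\{1,\dots,n,0,\bar n,\dots,\bar1\}$ totally ordered by $1\prec\cdots\prec n\prec0\prec\bar n\prec\cdots\prec\bar1$. Weights: $wt(\bar b)=-wt(b)$, $wt(b)=\Lambda_b-\Lambda_{b-1}$ for $1\le b\le n-1$ (so $wt(1)=\Lambda_1-\Lambda_0$), $wt(n)=2\Lambda_n-\Lambda_{n-1}$, $wt(0)=0$. Energy function: $H(b\otimes b')=0$ if $b\prec b'$, $=1$ if $b\succeq b'$, except $H(0\otimes0)=0$. For $j\ge0$, $b\in B$, $\mu\in P_{cl}$: $g_j(b,\mu)=\sum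 q^{\sum_{i=1}^j iH(b_{i+1}\otimes b_i)}$, summed over $(b_j,\dots,b_1)\in B^j$ with $wt(b_j)+\cdots+wt(b_1)=\mu$, where $b_{j+1}=b$. For an integer vector $\gamma=(\gamma_b)_{b\in B}$: $\begin{bmatrix}j\\ \gamma\end{bmatrix}_q=(q)_j/\prod_{b\in B}(q)_{\gamma_b}$ if $\sum_b\gamma_b=j$ and all $\gamma_b\ge0$, and $0$ otherwise; $(q)_m=\prod_{i=1}^m(1-q^i)$. *)

theory Defs
  imports "HOL-Computational_Algebra.Formal_Power_Series"
begin

text \<open>Elements of the crystal B = {1,...,n,0,nbar,...,1bar} for A^(2)_(2n).\<close>
datatype bel = Pos nat | Zr | Bar nat

definition Bset :: "nat \<Rightarrow> bel set" where
  "Bset n = Pos ` {1..n} \<union> {Zr} \<union> Bar ` {1..n}"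

fun brank :: "nat \<Rightarrow> bel \<Rightarrow> nat" where
  "brank n (Pos i) = i"
| "brank n Zr = n + 1"
| "brank n (Bar i) = 2 * n + 2 - i"

definition bprec :: "nat \<Rightarrow> bel \<Rightarrow> bel \<Rightarrow> bool" where
  "bprec n b b' \<longleftrightarrow> brank n b < brank n b'"

definition Hen :: "nat \<Rightarrow> bel \<Rightarrow> bel \<Rightarrow> nat" where
  "Hen n b b' = (if b = Zr \<and> b' = Zr then 0 else if bprec n b b' then 0 else 1)"

text \<open>Classical weights: P_cl = \<Oplus> Z Lambda_i, i = 0..n, as functions nat => int (zero beyond n).\<close>
definition Lam :: "nat \<Rightarrow> nat \<Rightarrow> int" where
  "Lam k = (\<lambda>m. if m = k then 1 else 0)"

definition wtpos :: "nat \<Rightarrow> nat \<Rightarrow> nat \<Rightarrow> int" where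
  "wtpos n i = (\<lambda>m. if i = n then 2 * Lam n m - Lam (n - 1) m else Lam i m - Lam (i - 1) m)"

fun wt :: "nat \<Rightarrow> bel \<Rightarrow> nat \<Rightarrow> int" where
  "wt n (Pos i) = wtpos n i"
| "wt n Zr = (\<lambda>m. 0)"
| "wt n (Bar i) = (\<lambda>m. - wtpos n i m)"

text \<open>g_j(b,mu) as a formal power series in q = fps_X. A sequence (b_j,...,b_1)
  is a function c with c i = b_i for i in {1..j}; b_{j+1} = b.\<close>
definition gfun :: "nat \<Rightarrow> nat \<Rightarrow> bel \<Rightarrow> (nat \<Rightarrow> int) \<Rightarrow> rat fps" where
  "gfun n j b \<mu> =
     (\<Sum>c \<in> {c \<in> PiE {1..j} (\<lambda>_. Bset n). (\<lambda>m. \<Sum>i=1..j. wt n (c i) m) = \<mu>}.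
        fps_X ^ (\<Sum>i=1..j. i * Hen n (if i = j then b else c (i + 1)) (c i)))"

definition qpoch :: "nat \<Rightarrow> rat fps" where
  "qpoch m = (\<Prod>i=1..m. 1 - fps_X ^ i)"

definition qmultinom :: "nat \<Rightarrow> nat \<Rightarrow> (bel \<Rightarrow> nat) \<Rightarrow> rat fps" where
  "qmultinom n j \<gamma> =
     (if (\<Sum>b\<in>Bset n. \<gamma> b) = j then qpoch j / (\<Prod>b\<in>Bset n. qpoch (\<gamma> b)) else 0)"

end

theory Submission imports Defs begin

text \<open>Refine \<open>g\<^sub>j(b,\<mu>)\<close> by the content \<open>\<gamma>\<close> of the path \<open>(b\<^sub>j,\<dots>,b\<^sub>1)\<close>, i.e. the number
  of occurrences of each letter. The weight of a path depends only on its content and equals \<open>\<mu>\<close>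
  iff \<open>\<gamma>(Pos i) - \<gamma>(Bar i) = \<mu>\<^sub>i\<close> for all \<open>i\<close>. Splitting off the letter \<open>x = b\<^sub>j\<close> shows that
  the content-refined sum satisfies \<open>F(j, b, \<gamma>) = \<Sum>\<^sub>x q\<^bsup>j H(b \<otimes> x)\<^esup> F(j - 1, x, \<gamma> - e\<^sub>x)\<close>.
  The claimed summand satisfies the same recursion: after multiplying by \<open>1 - q\<^sup>j\<close> and using
  \<open>(1 - q\<^sup>j) [j - 1; \<gamma> - e\<^sub>x] = (1 - q\<^bsup>\<gamma> x\<^esup>) [j; \<gamma>]\<close>, the sum over \<open>x\<close> telescopes along
  the order of \<open>B\<close>.\<close>

lemma telescope_power_sum:
  fixes x :: "'a::comm_ring_1" and g :: "nat \<Rightarrow> nat" and m :: nat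
  shows "(\<Sum>k=1..m. x ^ (\<Sum>i=1..<k. g i) * (1 - x ^ g k)) = 1 - x ^ (\<Sum>i=1..m. g i)"
proof (induction m)
  case (Suc m)
  have "(\<Sum>k=1..Suc m. x ^ (\<Sum>i=1..<k. g i) * (1 - x ^ g k))
      = x ^ (\<Sum>i=1..<Suc m. g i) * (1 - x ^ g (Suc m))
        + (\<Sum>k=1..m. x ^ (\<Sum>i=1..<k. g i) * (1 - x ^ g k))"
    by (rule sum.nat_ivl_Suc') simp
  also have "\<dots> = x ^ (\<Sum>i=1..m. g i) * (1 - x ^ g (Suc m)) + (1 - x ^ (\<Sum>i=1..m. g i))"
    by (simp only: Suc.IH atLeastLessThanSuc_atLeastAtMost)
  also have "\<dots> = 1 - x ^ (\<Sum>i=1..Suc m. g i)"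
    by (simp add: sum.nat_ivl_Suc' power_add algebra_simps)
  finally show ?case .
qed simp

lemma telescope_power_sum_split:
  fixes x :: "'a::comm_ring_1" and g :: "nat \<Rightarrow> nat"
  assumes "r \<le> N"
  defines "J \<equiv> \<Sum>i=1..N. g i"
  shows "(\<Sum>k=1..N. x ^ ((if k \<le> r then J else 0) + (\<Sum>i=1..<k. g i)) * (1 - x ^ g k))
       = x ^ (\<Sum>i=1..r. g i) * (1 - x ^ J)"
proof -
  define h where "h k = x ^ (\<Sum>i=1..<k. g i) * (1 - x ^ g k)" for k
  have split: "{1..N} = {1..r} \<union> {r<..N}" using assms(1) by auto
  have lower: "(\<Sum>k=1..r. h k) = 1 - x ^ (\<Sum>i=1..r. g i)"
    and all: "(\<Sum>k=1..N. h k) = 1 - x ^ J"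
    unfolding h_def J_def by (rule telescope_power_sum)+
  have "(\<Sum>k=1..N. h k) = (\<Sum>k=1..r. h k) + (\<Sum>k\<in>{r<..N}. h k)"
    unfolding split by (rule sum.union_disjoint) auto
  then have upper: "(\<Sum>k\<in>{r<..N}. h k) = x ^ (\<Sum>i=1..r. g i) - x ^ J"
    unfolding all lower by (simp add: algebra_simps)
  have "(\<Sum>k=1..N. x ^ ((if k \<le> r then J else 0) + (\<Sum>i=1..<k. g i)) * (1 - x ^ g k))
      = x ^ J * (\<Sum>k=1..r. h k) + (\<Sum>k\<in>{r<..N}. h k)"
    unfolding split by (subst sum.union_disjoint)
      (auto simp: h_def power_add sum_distrib_left mult.assoc intro!: sum.cong)
  also have "\<dots> = x ^ (\<Sum>i=1..r. g i) * (1 - x ^ J)"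
    unfolding lower upper by (simp add: algebra_simps)
  finally show ?thesis .
qed

lemma finite_Bset [simp]: "finite (Bset n)"
  by (simp add: Bset_def)

definition bel_of_rank :: "nat \<Rightarrow> nat \<Rightarrow> bel" where
  "bel_of_rank n k = (if k \<le> n then Pos k else if k = n + 1 then Zr else Bar (2 * n + 2 - k))"

lemma brank_in_range: "x \<in> Bset n \<Longrightarrow> brank n x \<in> {1..2 * n + 1}"
  by (auto simp: Bset_def)

lemma bel_of_rank_brank: "x \<in> Bset n \<Longrightarrow> bel_of_rank n (brank n x) = x"
  by (auto simp: Bset_def bel_of_rank_def)

lemma bij_betw_brank: "bij_betw (brank n) (Bset n) {1..2 * n + 1}"
  by (rule bij_betwI[where g = "bel_of_rank n"]) (force simp: Bset_def bel_of_rank_def)+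

lemma brank_eq_iff: "x \<in> Bset n \<Longrightarrow> y \<in> Bset n \<Longrightarrow> brank n x = brank n y \<longleftrightarrow> x = y"
  using bij_betw_brank[of n] by (auto simp: bij_betw_def inj_on_def)

lemma sum_Bset_by_rank: "(\<Sum>x\<in>Bset n. f (brank n x)) = (\<Sum>k=1..2 * n + 1. f k)"
  using sum.reindex_bij_betw[OF bij_betw_brank, of f n] by simp

lemma sum_Bset_eq_sum_ranks: "(\<Sum>x\<in>Bset n. \<gamma> x) = (\<Sum>k=1..2 * n + 1. \<gamma> (bel_of_rank n k))"
proof -
  have "(\<Sum>x\<in>Bset n. \<gamma> x) = (\<Sum>x\<in>Bset n. \<gamma> (bel_of_rank n (brank n x)))"
    by (rule sum.cong) (simp_all add: bel_of_rank_brank)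
  also have "\<dots> = (\<Sum>k=1..2 * n + 1. \<gamma> (bel_of_rank n k))"
    by (rule sum_Bset_by_rank)
  finally show ?thesis .
qed

lemma sum_if_less:
  "m \<le> Suc N \<Longrightarrow> (\<Sum>k=1..N. if k < m then g k else 0) = (\<Sum>k=1..<m. g k)"
proof -
  assume "m \<le> Suc N"
  then have "{k \<in> {1..N}. k < m} = {1..<m}" by auto
  then show ?thesis by (simp add: sum.inter_filter[symmetric])
qed

lemma Hen_by_rank:
  assumes "x \<in> Bset n" "y \<in> Bset n"
  shows "Hen n x y = (if brank n y < brank n x \<or> (y = x \<and> x \<noteq> Zr) then 1 else 0)"
  using brank_eq_iff[OF assms] by (auto simp: Hen_def bprec_def)

definition energy_cut :: "nat \<Rightarrow> bel \<Rightarrow> nat" where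
  "energy_cut n b = (if b = Zr then n else brank n b)"

lemma energy_cut_le: "b \<in> Bset n \<Longrightarrow> energy_cut n b \<le> 2 * n + 1"
  by (auto simp: energy_cut_def Bset_def)

lemma Hen_eq_energy_cut:
  assumes "b \<in> Bset n" "x \<in> Bset n"
  shows "Hen n b x = (if brank n x \<le> energy_cut n b then 1 else 0)"
  using Hen_by_rank[OF assms] brank_eq_iff[OF assms(2,1)] by (auto simp: energy_cut_def)

definition energy_exp :: "nat \<Rightarrow> bel \<Rightarrow> (bel \<Rightarrow> nat) \<Rightarrow> nat" where
  "energy_exp n b \<gamma> = (\<Sum>x\<in>Bset n. Hen n b x * \<gamma> x)"

definition count_below :: "nat \<Rightarrow> (bel \<Rightarrow> nat) \<Rightarrow> bel \<Rightarrow> nat" where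
  "count_below n \<gamma> x = (\<Sum>y\<in>{y \<in> Bset n. bprec n y x}. \<gamma> y)"

lemma energy_exp_by_rank:
  assumes b: "b \<in> Bset n"
  shows "energy_exp n b \<gamma> = (\<Sum>k=1..energy_cut n b. \<gamma> (bel_of_rank n k))"
proof -
  have "energy_exp n b \<gamma>
      = (\<Sum>x\<in>Bset n. (\<lambda>k. if k < Suc (energy_cut n b) then \<gamma> (bel_of_rank n k) else 0) (brank n x))"
    unfolding energy_exp_def by (rule sum.cong) (auto simp: Hen_eq_energy_cut[OF b] bel_of_rank_brank)
  also have "\<dots> = (\<Sum>k=1..2 * n + 1. if k < Suc (energy_cut n b) then \<gamma> (bel_of_rank n k) else 0)"
    by (rule sum_Bset_by_rank)
  also have "\<dots> = (\<Sum>k=1..<Suc (energy_cut n b). \<gamma> (bel_of_rank n k))"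
    using energy_cut_le[OF b] by (intro sum_if_less) auto
  finally show ?thesis
    by (simp add: atLeastLessThanSuc_atLeastAtMost)
qed

lemma count_below_by_rank:
  assumes x: "x \<in> Bset n"
  shows "count_below n \<gamma> x = (\<Sum>k=1..<brank n x. \<gamma> (bel_of_rank n k))"
proof -
  have "count_below n \<gamma> x
      = (\<Sum>y\<in>Bset n. (\<lambda>k. if k < brank n x then \<gamma> (bel_of_rank n k) else 0) (brank n y))"
    unfolding count_below_def bprec_def sum.inter_filter[OF finite_Bset, symmetric]
    by (rule sum.cong) (auto simp: bel_of_rank_brank)
  also have "\<dots> = (\<Sum>k=1..2 * n + 1. if k < brank n x then \<gamma> (bel_of_rank n k) else 0)"
    by (rule sum_Bset_by_rank)
  also have "\<dots> = (\<Sum>k=1..<brank n x. \<gamma> (bel_of_rank n k))"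
    using brank_in_range[OF x] by (intro sum_if_less) auto
  finally show ?thesis .
qed

text \<open>Listed in the order of \<open>B\<close>, the factors \<open>q\<^bsup>count_below\<^esup>\<close> are partial sums, and
  \<open>H(b \<otimes> x) = 1\<close> exactly on an initial segment, so the sum telescopes.\<close>
lemma energy_telescope:
  fixes q :: "'a::comm_ring_1" and \<gamma> :: "bel \<Rightarrow> nat"
  assumes b: "b \<in> Bset n"
  defines "J \<equiv> \<Sum>x\<in>Bset n. \<gamma> x"
  shows "(\<Sum>x\<in>Bset n. q ^ (J * Hen n b x + count_below n \<gamma> x) * (1 - q ^ \<gamma> x))
       = q ^ energy_exp n b \<gamma> * (1 - q ^ J)"
proof -
  define g where "g k = \<gamma> (bel_of_rank n k)" for k
  define r where "r = energy_cut n b"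
  have "(\<Sum>x\<in>Bset n. q ^ (J * Hen n b x + count_below n \<gamma> x) * (1 - q ^ \<gamma> x))
     = (\<Sum>x\<in>Bset n. (\<lambda>k. q ^ ((if k \<le> r then J else 0) + (\<Sum>i=1..<k. g i)) * (1 - q ^ g k))
                        (brank n x))"
    by (rule sum.cong)
      (simp_all add: r_def g_def Hen_eq_energy_cut[OF b] count_below_by_rank bel_of_rank_brank)
  also have "\<dots> = (\<Sum>k=1..2 * n + 1. q ^ ((if k \<le> r then J else 0) + (\<Sum>i=1..<k. g i)) * (1 - q ^ g k))"
    by (rule sum_Bset_by_rank)
  also have "\<dots> = q ^ energy_exp n b \<gamma> * (1 - q ^ J)"
    unfolding energy_exp_by_rank[OF b] J_def sum_Bset_eq_sum_ranks g_def[symmetric] r_def[symmetric]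
    using energy_cut_le[OF b] unfolding r_def[symmetric] by (rule telescope_power_sum_split)
  finally show ?thesis .
qed

lemma sum_fun_upd_remove:
  "finite A \<Longrightarrow> x \<in> A \<Longrightarrow> (\<Sum>y\<in>A. h ((g(x := v)) y)) = h v + (\<Sum>y\<in>A - {x}. h (g y))"
  by (subst sum.remove) (auto intro!: sum.cong)

lemma prod_fun_upd_remove:
  "finite A \<Longrightarrow> x \<in> A \<Longrightarrow> (\<Prod>y\<in>A. h ((g(x := v)) y)) = h v * (\<Prod>y\<in>A - {x}. h (g y))"
  by (subst prod.remove) (auto intro!: prod.cong)

lemma sum_decrement:
  fixes \<gamma> :: "'a \<Rightarrow> nat"
  assumes "finite A" "x \<in> A" "1 \<le> \<gamma> x"
  shows "(\<Sum>y\<in>A. (\<gamma>(x := \<gamma> x - 1)) y) = (\<Sum>y\<in>A. \<gamma> y) - 1"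
proof -
  have "(\<Sum>y\<in>A. (\<gamma>(x := \<gamma> x - 1)) y) = (\<gamma> x - 1) + (\<Sum>y\<in>A - {x}. \<gamma> y)"
    by (rule sum_fun_upd_remove[where h = "\<lambda>k. k"]) (use assms in auto)
  then show ?thesis
    using sum.remove[OF assms(1,2), of \<gamma>] assms(3) by simp
qed

definition binom_exp :: "nat \<Rightarrow> (bel \<Rightarrow> nat) \<Rightarrow> nat" where
  "binom_exp n \<gamma> = (\<Sum>x\<in>Bset n - {Zr}. \<gamma> x * (\<gamma> x - 1)) div 2"

lemma binom_exp_decrement:
  assumes x: "x \<in> Bset n" and pos: "1 \<le> \<gamma> x"
  shows "binom_exp n \<gamma> = binom_exp n (\<gamma>(x := \<gamma> x - 1)) + (if x = Zr then 0 else \<gamma> x - 1)"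
proof (cases "x = Zr")
  case True
  then show ?thesis
    unfolding binom_exp_def by (auto intro!: arg_cong[where f = "\<lambda>t. t div 2"] sum.cong)
next
  case False
  define f where "f k = k * (k - 1)" for k :: nat
  have x': "x \<in> Bset n - {Zr}" using x False by simp
  obtain m where m: "\<gamma> x = Suc m" using pos by (cases "\<gamma> x") auto
  have "f (\<gamma> x) = f (\<gamma> x - 1) + 2 * (\<gamma> x - 1)"
    unfolding m by (cases m) (simp_all add: f_def)
  then have "(\<Sum>y\<in>Bset n - {Zr}. f (\<gamma> y))
      = (\<Sum>y\<in>Bset n - {Zr}. f ((\<gamma>(x := \<gamma> x - 1)) y)) + 2 * (\<gamma> x - 1)"
    using sum.remove[OF _ x', of "\<lambda>y. f (\<gamma> y)"] sum_fun_upd_remove[OF _ x', of f \<gamma>] by simp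
  then show ?thesis
    using False unfolding binom_exp_def f_def by simp
qed

lemma energy_exp_self:
  assumes x: "x \<in> Bset n"
  shows "energy_exp n x \<delta> = count_below n \<delta> x + (if x = Zr then 0 else \<delta> x)"
proof -
  have "energy_exp n x \<delta>
      = (\<Sum>y\<in>Bset n. (if bprec n y x then \<delta> y else 0) + (if y = x \<and> x \<noteq> Zr then \<delta> y else 0))"
    unfolding energy_exp_def by (rule sum.cong) (auto simp: Hen_by_rank[OF x] bprec_def)
  then show ?thesis
    using x by (simp add: sum.distrib count_below_def sum.inter_filter)
qed

lemma count_below_decrement: "count_below n (\<gamma>(x := v)) x = count_below n \<gamma> x"
  unfolding count_below_def bprec_def by (rule sum.cong) auto

text \<open>The loss \<open>\<gamma>\<^sub>x - 1\<close> in the binomial part is compensated by the diagonal term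
  \<open>H(x \<otimes> x) = 1\<close> (\<open>x \<noteq> 0\<close>) of the energy part.\<close>
lemma exponent_decrement:
  assumes "x \<in> Bset n" "1 \<le> \<gamma> x"
  shows "binom_exp n (\<gamma>(x := \<gamma> x - 1)) + energy_exp n x (\<gamma>(x := \<gamma> x - 1))
       = binom_exp n \<gamma> + count_below n \<gamma> x"
  using binom_exp_decrement[of x n \<gamma>, OF assms] energy_exp_self[OF assms(1), of "\<gamma>(x := \<gamma> x - 1)"]
    count_below_decrement[of n \<gamma> x] assms(2) by auto

lemma fps_nth_0_prod: "fps_nth (\<Prod>x\<in>A. f x) 0 = (\<Prod>x\<in>A. fps_nth (f x) 0)"
  for f :: "'a \<Rightarrow> 'b::comm_semiring_1 fps"
  by (induction A rule: infinite_finite_induct) auto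

lemma qpoch_nth_0 [simp]: "fps_nth (qpoch m) 0 = 1"
  unfolding qpoch_def by (simp add: fps_nth_0_prod)

lemma qpoch_Suc: "qpoch (Suc m) = (1 - fps_X ^ Suc m) * qpoch m"
  unfolding qpoch_def by (rule prod.nat_ivl_Suc') simp

lemma one_minus_fps_X_power_neq_0: "1 - fps_X ^ Suc m \<noteq> (0 :: 'a::comm_ring_1 fps)"
proof
  assume "1 - fps_X ^ Suc m = (0 :: 'a fps)"
  then have "fps_nth (1 - fps_X ^ Suc m :: 'a fps) 0 = 0" by simp
  then show False by simp
qed

definition qmultinom_denom :: "nat \<Rightarrow> (bel \<Rightarrow> nat) \<Rightarrow> rat fps" where
  "qmultinom_denom n \<gamma> = (\<Prod>x\<in>Bset n. qpoch (\<gamma> x))"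

lemma qmultinom_denom_nth_0: "fps_nth (qmultinom_denom n \<gamma>) 0 = 1"
  by (simp add: qmultinom_denom_def fps_nth_0_prod)

lemma qmultinom_denom_neq_0: "qmultinom_denom n \<gamma> \<noteq> 0"
  using qmultinom_denom_nth_0[of n \<gamma>] by auto

lemma qmultinom_times_denom:
  "(\<Sum>x\<in>Bset n. \<gamma> x) = j \<Longrightarrow> qmultinom n j \<gamma> * qmultinom_denom n \<gamma> = qpoch j"
  unfolding qmultinom_def qmultinom_denom_def[symmetric]
  by (simp add: fps_times_divide_eq qmultinom_denom_neq_0 qmultinom_denom_nth_0)

lemma qmultinom_denom_decrement:
  assumes x: "x \<in> Bset n" and pos: "1 \<le> \<gamma> x"
  shows "qmultinom_denom n \<gamma> = (1 - fps_X ^ \<gamma> x) * qmultinom_denom n (\<gamma>(x := \<gamma> x - 1))"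
proof -
  obtain m where m: "\<gamma> x = Suc m" using pos by (cases "\<gamma> x") auto
  show ?thesis
    unfolding qmultinom_denom_def prod.remove[OF finite_Bset x, of "\<lambda>y. qpoch (\<gamma> y)"]
      prod_fun_upd_remove[OF finite_Bset x, of qpoch]
    by (simp add: m qpoch_Suc)
qed

lemma qmultinom_decrement:
  assumes x: "x \<in> Bset n" and pos: "1 \<le> \<gamma> x" and size: "(\<Sum>y\<in>Bset n. \<gamma> y) = Suc j"
  shows "(1 - fps_X ^ Suc j) * qmultinom n j (\<gamma>(x := \<gamma> x - 1))
       = (1 - fps_X ^ \<gamma> x) * qmultinom n (Suc j) \<gamma>"
proof -
  let ?\<delta> = "\<gamma>(x := \<gamma> x - 1)"
  have size': "(\<Sum>y\<in>Bset n. ?\<delta> y) = j"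
    using sum_decrement[of "Bset n" x \<gamma>, OF finite_Bset x pos] size by simp
  have "(1 - fps_X ^ Suc j) * qmultinom n j ?\<delta> * qmultinom_denom n \<gamma>
      = (1 - fps_X ^ \<gamma> x) * ((1 - fps_X ^ Suc j) * (qmultinom n j ?\<delta> * qmultinom_denom n ?\<delta>))"
    unfolding qmultinom_denom_decrement[of x n \<gamma>, OF x pos] by (simp only: ac_simps)
  also have "\<dots> = (1 - fps_X ^ \<gamma> x) * qmultinom n (Suc j) \<gamma> * qmultinom_denom n \<gamma>"
    by (simp only: qmultinom_times_denom[OF size'] qmultinom_times_denom[OF size] qpoch_Suc mult.assoc)
  finally show ?thesis
    using qmultinom_denom_neq_0 by simp
qed

lemma sum_PiE_insert:
  assumes "a \<notin> I"
  shows "(\<Sum>c\<in>Pi\<^sub>E (insert a I) A. h c) = (\<Sum>x\<in>A a. \<Sum>c\<in>Pi\<^sub>E I A. h (c(a := x)))"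
proof -
  have "(\<Sum>c\<in>Pi\<^sub>E (insert a I) A. h c) = (\<Sum>(x, c)\<in>A a \<times> Pi\<^sub>E I A. h (c(a := x)))"
    unfolding PiE_insert_eq by (subst sum.reindex) (auto intro: inj_combinator[OF assms] simp: case_prod_beta)
  then show ?thesis
    by (simp add: sum.cartesian_product)
qed

definition words :: "nat \<Rightarrow> nat \<Rightarrow> (nat \<Rightarrow> bel) set" where
  "words n j = {1..j} \<rightarrow>\<^sub>E Bset n"

definition path_energy :: "nat \<Rightarrow> nat \<Rightarrow> bel \<Rightarrow> (nat \<Rightarrow> bel) \<Rightarrow> nat" where
  "path_energy n j b c = (\<Sum>i=1..j. i * Hen n (if i = j then b else c (i + 1)) (c i))"

definition content :: "nat \<Rightarrow> nat \<Rightarrow> (nat \<Rightarrow> bel) \<Rightarrow> bel \<Rightarrow> nat" where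
  "content n j c = restrict (\<lambda>x. card {i \<in> {1..j}. c i = x}) (Bset n)"

definition gfun_content :: "nat \<Rightarrow> nat \<Rightarrow> bel \<Rightarrow> (bel \<Rightarrow> nat) \<Rightarrow> rat fps" where
  "gfun_content n j b \<gamma> = (\<Sum>c\<in>words n j. if content n j c = \<gamma> then fps_X ^ path_energy n j b c else 0)"

lemma sum_words_Suc:
  "(\<Sum>c\<in>words n (Suc j). h c) = (\<Sum>x\<in>Bset n. \<Sum>c\<in>words n j. h (c(Suc j := x)))"
proof -
  have "{1..Suc j} = insert (Suc j) {1..j}" by auto
  then show ?thesis
    unfolding words_def by (simp add: sum_PiE_insert)
qed

lemma path_energy_extend:
  "path_energy n (Suc j) b (c(Suc j := x)) = Suc j * Hen n b x + path_energy n j x c"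
proof -
  have "path_energy n (Suc j) b (c(Suc j := x)) = Suc j * Hen n b x +
     (\<Sum>i=1..j. i * Hen n (if i = Suc j then b else (c(Suc j := x)) (i + 1)) ((c(Suc j := x)) i))"
    unfolding path_energy_def by (subst sum.nat_ivl_Suc') simp_all
  also have "(\<Sum>i=1..j. i * Hen n (if i = Suc j then b else (c(Suc j := x)) (i + 1)) ((c(Suc j := x)) i))
      = path_energy n j x c"
    unfolding path_energy_def by (rule sum.cong) auto
  finally show ?thesis .
qed

lemma content_extend:
  assumes x: "x \<in> Bset n"
  shows "content n (Suc j) (c(Suc j := x)) = (content n j c)(x := content n j c x + 1)"
proof
  fix y
  have "{i \<in> {1..Suc j}. (c(Suc j := x)) i = y}
      = (if x = y then insert (Suc j) {i \<in> {1..j}. c i = y} else {i \<in> {1..j}. c i = y})"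
    by auto
  then have card: "card {i \<in> {1..Suc j}. (c(Suc j := x)) i = y}
      = card {i \<in> {1..j}. c i = y} + (if x = y then 1 else 0)"
    by simp
  show "content n (Suc j) (c(Suc j := x)) y = ((content n j c)(x := content n j c x + 1)) y"
    unfolding content_def restrict_apply card using x by auto
qed

lemma content_extend_eq_iff:
  assumes "x \<in> Bset n"
  shows "content n (Suc j) (c(Suc j := x)) = \<gamma> \<longleftrightarrow> 1 \<le> \<gamma> x \<and> content n j c = \<gamma>(x := \<gamma> x - 1)"
  unfolding content_extend[OF assms] by auto

lemma gfun_content_Suc:
  "gfun_content n (Suc j) b \<gamma> = (\<Sum>x\<in>Bset n.
     if 1 \<le> \<gamma> x then fps_X ^ (Suc j * Hen n b x) * gfun_content n j x (\<gamma>(x := \<gamma> x - 1)) else 0)"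
  unfolding gfun_content_def sum_words_Suc
  by (rule sum.cong) (auto simp: content_extend_eq_iff path_energy_extend power_add sum_distrib_left
      intro!: sum.cong)

definition gfun_content_formula :: "nat \<Rightarrow> nat \<Rightarrow> bel \<Rightarrow> (bel \<Rightarrow> nat) \<Rightarrow> rat fps" where
  "gfun_content_formula n j b \<gamma> = fps_X ^ (binom_exp n \<gamma> + energy_exp n b \<gamma>) * qmultinom n j \<gamma>"

lemma gfun_content_formula_Suc:
  assumes b: "b \<in> Bset n" and size: "(\<Sum>x\<in>Bset n. \<gamma> x) = Suc j"
  shows "gfun_content_formula n (Suc j) b \<gamma> = (\<Sum>x\<in>Bset n.
     if 1 \<le> \<gamma> x then fps_X ^ (Suc j * Hen n b x) * gfun_content_formula n j x (\<gamma>(x := \<gamma> x - 1)) else 0)"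
proof -
  let ?M = "fps_X ^ binom_exp n \<gamma> * qmultinom n (Suc j) \<gamma>"
  have summand: "(1 - fps_X ^ Suc j) *
        (if 1 \<le> \<gamma> x then fps_X ^ (Suc j * Hen n b x) * gfun_content_formula n j x (\<gamma>(x := \<gamma> x - 1)) else 0)
      = fps_X ^ (Suc j * Hen n b x + count_below n \<gamma> x) * (1 - fps_X ^ \<gamma> x) * ?M"
    if x: "x \<in> Bset n" for x
  proof (cases "1 \<le> \<gamma> x")
    case pos: True
    have "(1 - fps_X ^ Suc j) * (fps_X ^ (Suc j * Hen n b x) * gfun_content_formula n j x (\<gamma>(x := \<gamma> x - 1)))
        = fps_X ^ (Suc j * Hen n b x) * fps_X ^ (binom_exp n \<gamma> + count_below n \<gamma> x)
          * ((1 - fps_X ^ Suc j) * qmultinom n j (\<gamma>(x := \<gamma> x - 1)))"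
      unfolding gfun_content_formula_def exponent_decrement[of x n \<gamma>, OF x pos] by (simp only: ac_simps)
    also have "\<dots> = fps_X ^ (Suc j * Hen n b x) * fps_X ^ (binom_exp n \<gamma> + count_below n \<gamma> x)
          * ((1 - fps_X ^ \<gamma> x) * qmultinom n (Suc j) \<gamma>)"
      by (simp only: qmultinom_decrement[of x n \<gamma>, OF x pos size])
    also have "\<dots> = fps_X ^ (Suc j * Hen n b x + count_below n \<gamma> x) * (1 - fps_X ^ \<gamma> x) * ?M"
      by (simp only: power_add ac_simps)
    finally show ?thesis
      using pos by simp
  next
    case False
    then have "\<gamma> x = 0" by linarith
    then show ?thesis by simp
  qed
  have telescope: "(\<Sum>x\<in>Bset n. fps_X ^ (Suc j * Hen n b x + count_below n \<gamma> x) * (1 - fps_X ^ \<gamma> x))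
      = fps_X ^ energy_exp n b \<gamma> * (1 - fps_X ^ Suc j :: rat fps)"
    using energy_telescope[OF b, of fps_X \<gamma>] unfolding size .
  have "(1 - fps_X ^ Suc j) * (\<Sum>x\<in>Bset n.
      if 1 \<le> \<gamma> x then fps_X ^ (Suc j * Hen n b x) * gfun_content_formula n j x (\<gamma>(x := \<gamma> x - 1)) else 0)
      = (\<Sum>x\<in>Bset n. fps_X ^ (Suc j * Hen n b x + count_below n \<gamma> x) * (1 - fps_X ^ \<gamma> x)) * ?M"
    unfolding sum_distrib_left sum_distrib_right by (rule sum.cong[OF refl]) (rule summand)
  also have "\<dots> = (1 - fps_X ^ Suc j) * gfun_content_formula n (Suc j) b \<gamma>"
    unfolding telescope gfun_content_formula_def by (simp only: power_add ac_simps)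
  finally show ?thesis
    by (rule mult_left_cancel[OF one_minus_fps_X_power_neq_0, THEN iffD1, symmetric])
qed

lemma gfun_content_eq_formula:
  assumes "b \<in> Bset n" "\<gamma> \<in> Bset n \<rightarrow>\<^sub>E UNIV" "(\<Sum>x\<in>Bset n. \<gamma> x) = j"
  shows "gfun_content n j b \<gamma> = gfun_content_formula n j b \<gamma>"
  using assms
proof (induction j arbitrary: b \<gamma>)
  case 0
  then have \<gamma>: "\<gamma> = restrict (\<lambda>_. 0) (Bset n)"
    by (auto simp: PiE_def extensional_def restrict_def)
  have words_0: "words n 0 = {\<lambda>_. undefined}"
    by (simp add: words_def)
  show ?case
    unfolding gfun_content_def words_0
    by (simp add: \<gamma> content_def path_energy_def gfun_content_formula_def binom_exp_def energy_exp_def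
        qmultinom_def qpoch_def)
next
  case (Suc j)
  have "gfun_content n j x (\<gamma>(x := \<gamma> x - 1)) = gfun_content_formula n j x (\<gamma>(x := \<gamma> x - 1))"
    if "x \<in> Bset n" "1 \<le> \<gamma> x" for x
  proof (rule Suc.IH)
    show "\<gamma>(x := \<gamma> x - 1) \<in> Bset n \<rightarrow>\<^sub>E UNIV"
      using Suc.prems(2) that(1) by (auto simp: PiE_def extensional_def)
    show "(\<Sum>y\<in>Bset n. (\<gamma>(x := \<gamma> x - 1)) y) = j"
      using sum_decrement[of "Bset n" x \<gamma>] that Suc.prems(3) by simp
  qed (use that in simp)
  then show ?case
    unfolding gfun_content_Suc gfun_content_formula_Suc[OF Suc.prems(1,3)] by (intro sum.cong) auto
qed

lemma sum_word_by_content: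
  fixes f :: "bel \<Rightarrow> 'a::comm_semiring_1"
  assumes "c \<in> words n j"
  shows "(\<Sum>i=1..j. f (c i)) = (\<Sum>x\<in>Bset n. of_nat (content n j c x) * f x)"
proof -
  have "c ` {1..j} \<subseteq> Bset n"
    using assms by (auto simp: words_def)
  then have "(\<Sum>i=1..j. f (c i)) = (\<Sum>x\<in>Bset n. \<Sum>i\<in>{i \<in> {1..j}. c i = x}. f (c i))"
    by (intro sum.group[symmetric]) auto
  also have "\<dots> = (\<Sum>x\<in>Bset n. of_nat (content n j c x) * f x)"
    by (rule sum.cong) (auto simp: content_def)
  finally show ?thesis .
qed

lemma sum_content: "c \<in> words n j \<Longrightarrow> (\<Sum>x\<in>Bset n. content n j c x) = j"
  using sum_word_by_content[of c n j "\<lambda>_. 1 :: nat"] by simp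

lemma content_in_PiE: "content n j c \<in> Bset n \<rightarrow>\<^sub>E UNIV"
  by (simp add: content_def)

lemma sum_Bset:
  "(\<Sum>x\<in>Bset n. f x) = (\<Sum>i=1..n. f (Pos i)) + f Zr + (\<Sum>i=1..n. f (Bar i))"
proof -
  have "Bset n = insert Zr (Pos ` {1..n} \<union> Bar ` {1..n})"
    by (auto simp: Bset_def)
  moreover have "Zr \<notin> Pos ` {1..n} \<union> Bar ` {1..n}" "Pos ` {1..n} \<inter> Bar ` {1..n} = {}"
    by auto
  ultimately have "(\<Sum>x\<in>Bset n. f x) = f Zr + (sum f (Pos ` {1..n}) + sum f (Bar ` {1..n}))"
    by (simp add: sum.union_disjoint)
  then show ?thesis
    by (simp add: sum.reindex inj_on_def ac_simps)
qed

definition wt_comb :: "nat \<Rightarrow> (nat \<Rightarrow> int) \<Rightarrow> nat \<Rightarrow> int" where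
  "wt_comb n D = (\<lambda>k. if k = 0 then - D 1 else if k < n then D k - D (k + 1) else if k = n then 2 * D n else 0)"

lemma sum_wtpos_eq_wt_comb:
  assumes "1 \<le> n"
  shows "(\<Sum>i=1..n. D i * wtpos n i m) = wt_comb n D m"
proof -
  obtain k where n: "n = Suc k" using assms by (cases n) auto
  have "(\<Sum>i=1..n. D i * wtpos n i m) = D n * wtpos n n m + (\<Sum>i=1..k. D i * wtpos n i m)"
    unfolding n by (rule sum.nat_ivl_Suc') simp
  also have "(\<Sum>i=1..k. D i * wtpos n i m) = (\<Sum>i=1..k. (if i = m then D i else 0) - (if i = m + 1 then D i else 0))"
    by (rule sum.cong) (auto simp: wtpos_def Lam_def n)
  also have "\<dots> = (if m \<in> {1..k} then D m else 0) - (if m + 1 \<in> {1..k} then D (m + 1) else 0)"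
    by (simp add: sum_subtractf sum.delta')
  finally show ?thesis
    by (auto simp: wt_comb_def wtpos_def Lam_def n)
qed

lemma wt_comb_eq_iff:
  assumes "1 \<le> n"
  shows "wt_comb n D = wt_comb n E \<longleftrightarrow> (\<forall>i\<in>{1..n}. D i = E i)"
proof
  assume eq: "wt_comb n D = wt_comb n E"
  have "D i = E i" if "1 \<le> i" "i \<le> n" for i
    using that
  proof (induction i rule: nat_induct_at_least)
    case base
    then show ?case using fun_cong[OF eq, of 0] by (simp add: wt_comb_def)
  next
    case (Suc i)
    then show ?case using fun_cong[OF eq, of i] by (simp add: wt_comb_def)
  qed
  then show "\<forall>i\<in>{1..n}. D i = E i" by simp
next
  assume "\<forall>i\<in>{1..n}. D i = E i"
  then show "wt_comb n D = wt_comb n E"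
    using assms by (auto simp: wt_comb_def)
qed

lemma word_weight_eq_wt_comb_iff:
  assumes n: "1 \<le> n" and c: "c \<in> words n j"
  shows "(\<lambda>m. \<Sum>i=1..j. wt n (c i) m) = wt_comb n \<mu>s \<longleftrightarrow>
         (\<forall>i\<in>{1..n}. int (content n j c (Pos i)) - int (content n j c (Bar i)) = \<mu>s i)"
proof -
  define D where "D i = int (content n j c (Pos i)) - int (content n j c (Bar i))" for i
  have "(\<lambda>m. \<Sum>i=1..j. wt n (c i) m) = wt_comb n D"
  proof
    fix m
    have "(\<Sum>i=1..j. wt n (c i) m) = (\<Sum>i=1..n. D i * wtpos n i m)"
      unfolding sum_word_by_content[OF c, of "\<lambda>x. wt n x m"] sum_Bset
      by (simp add: D_def algebra_simps sum.distrib[symmetric] sum_subtractf[symmetric])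
    then show "(\<Sum>i=1..j. wt n (c i) m) = wt_comb n D m"
      unfolding sum_wtpos_eq_wt_comb[OF n] .
  qed
  then show ?thesis
    by (simp add: wt_comb_eq_iff[OF n] D_def)
qed

lemma gfun_eq_sum_gfun_content:
  fixes n j :: nat and \<mu>s :: "nat \<Rightarrow> int"
  assumes n: "1 \<le> n"
  defines "T \<equiv> {\<gamma> \<in> Bset n \<rightarrow>\<^sub>E (UNIV :: nat set).
              (\<forall>i\<in>{1..n}. int (\<gamma> (Pos i)) - int (\<gamma> (Bar i)) = \<mu>s i)
              \<and> (\<Sum>i\<in>Bset n. \<gamma> i) = j}"
  shows "gfun n j b (wt_comb n \<mu>s) = (\<Sum>\<gamma>\<in>T. gfun_content n j b \<gamma>)"
proof -
  have "T \<subseteq> Bset n \<rightarrow>\<^sub>E {0..j}"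
  proof
    fix \<gamma> assume \<gamma>: "\<gamma> \<in> T"
    then have "\<gamma> x \<le> j" if "x \<in> Bset n" for x
      using member_le_sum[of x "Bset n" \<gamma>] that by (auto simp: T_def)
    then show "\<gamma> \<in> Bset n \<rightarrow>\<^sub>E {0..j}"
      using \<gamma> by (auto simp: T_def PiE_def Pi_def)
  qed
  then have "finite T"
    by (rule finite_subset) (simp add: finite_PiE)
  have "(\<Sum>\<gamma>\<in>T. gfun_content n j b \<gamma>)
      = (\<Sum>c\<in>words n j. \<Sum>\<gamma>\<in>T. if content n j c = \<gamma> then fps_X ^ path_energy n j b c else 0)"
    unfolding gfun_content_def by (rule sum.swap)
  also have "\<dots> = (\<Sum>c\<in>words n j. if content n j c \<in> T then fps_X ^ path_energy n j b c else 0)"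
    using \<open>finite T\<close> by (simp add: sum.delta)
  also have "\<dots> = (\<Sum>c\<in>words n j.
      if (\<lambda>m. \<Sum>i=1..j. wt n (c i) m) = wt_comb n \<mu>s then fps_X ^ path_energy n j b c else 0)"
    using word_weight_eq_wt_comb_iff[OF n] content_in_PiE sum_content
    by (intro sum.cong refl) (simp add: T_def)
  also have "\<dots> = gfun n j b (wt_comb n \<mu>s)"
    unfolding gfun_def words_def path_energy_def by (rule sum.inter_filter[symmetric]) (simp add: finite_PiE)
  finally show ?thesis ..
qed

theorem mainTheorem16:
  fixes n j :: nat and b :: bel and \<mu>s :: "nat \<Rightarrow> int" and \<mu> :: "nat \<Rightarrow> int"
  assumes "n \<ge> 2" and "b \<in> Bset n"
    and "\<mu> = (\<lambda>k. if k = 0 then - \<mu>s 1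
                  else if k < n then \<mu>s k - \<mu>s (k + 1)
                  else if k = n then 2 * \<mu>s n else 0)"
  shows "gfun n j b \<mu> =
    (\<Sum>\<gamma> \<in> {\<gamma> \<in> Bset n \<rightarrow>\<^sub>E (UNIV :: nat set).
              (\<forall>i\<in>{1..n}. int (\<gamma> (Pos i)) - int (\<gamma> (Bar i)) = \<mu>s i)
              \<and> (\<Sum>i\<in>Bset n. \<gamma> i) = j}.
       fps_X ^ ((\<Sum>i\<in>Bset n - {Zr}. \<gamma> i * (\<gamma> i - 1)) div 2
                + (\<Sum>i\<in>Bset n. Hen n b i * \<gamma> i))
       * qmultinom n j \<gamma>)"
proof -
  have n: "1 \<le> n"
    using assms(1) by simp
  have \<mu>: "\<mu> = wt_comb n \<mu>s"
    using assms(3) by (simp add: wt_comb_def)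
  show ?thesis
    unfolding \<mu> gfun_eq_sum_gfun_content[OF n]
    by (intro sum.cong refl) (auto simp: gfun_content_eq_formula[OF assms(2)] gfun_content_formula_def
        binom_exp_def energy_exp_def)
qed

end
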